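(* Let $G$ be a group with finite generating set $S$. If the Cayley graph $Cay(G,S)$ is $\delta$-hyperbolic, then $G$ is $[4\delta+2,\,4\delta+3]$-chordal with respect to $S$.
   Context: $S^{\pm1}=S\cup S^{-1}\setminus\{e\}$; $Cay(G,S)$ has vertex set $G$, edges $\{g,gs\}$ ($s\in S^{\pm1}$), each edge isometric to $[0,1]$, with the path-length metric. A geodesic metric space is $\delta$-hyperbolic if every geodesic triangle is $\delta$-thin: each side lies in the closed $\delta$-neighborhood of the union of the other two sides. A relation $s_1\cdots s_n=e$ with $n>2$, $s_i\in S^{\pm1}$, is simple if $s_p\cdots s_q=e$ holds exactly when $(p,q)=(1,n)$. $G$ is $[i_0,k]$-chordal with respect to $S$ if for every simple relation $s_1\cdots s_n=e$ with $n\ge k$ there exist $1\le i\le i_0$, $i<j\le n$ and $s'_1,\dots,s'_r\in S^{\pm1}$ with $s_i\cdots s_j=s'_1\cdots s'_r$ and $r\le\min\{j-i,\,n-j+i-2\}$. *)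

theory Defs
  imports "HOL-Algebra.Algebra"
begin

definition Spm :: "('a, 'b) monoid_scheme \<Rightarrow> 'a set \<Rightarrow> 'a set" where
  "Spm G S = (S \<union> (\<lambda>s. inv\<^bsub>G\<^esub> s) ` S) - {\<one>\<^bsub>G\<^esub>}"

definition wprod :: "('a, 'b) monoid_scheme \<Rightarrow> 'a list \<Rightarrow> 'a" where
  "wprod G w = foldr (\<lambda>x y. x \<otimes>\<^bsub>G\<^esub> y) w \<one>\<^bsub>G\<^esub>"

text \<open>The subword s_p ... s_q of s_1 ... s_n (1-based indices).\<close>
definition subw :: "'a list \<Rightarrow> nat \<Rightarrow> nat \<Rightarrow> 'a list" where
  "subw xs p q = take (Suc q - p) (drop (p - 1) xs)"

definition simple_relation :: "('a, 'b) monoid_scheme \<Rightarrow> 'a set \<Rightarrow> 'a list \<Rightarrow> bool" where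
  "simple_relation G S xs \<longleftrightarrow>
     length xs > 2 \<and> set xs \<subseteq> Spm G S \<and>
     (\<forall>p q. 1 \<le> p \<and> p \<le> q \<and> q \<le> length xs \<longrightarrow>
        (wprod G (subw xs p q) = \<one>\<^bsub>G\<^esub> \<longleftrightarrow> (p = 1 \<and> q = length xs)))"

definition chordal :: "('a, 'b) monoid_scheme \<Rightarrow> 'a set \<Rightarrow> real \<Rightarrow> real \<Rightarrow> bool" where
  "chordal G S i0 k \<longleftrightarrow>
     (\<forall>xs. simple_relation G S xs \<and> real (length xs) \<ge> k \<longrightarrow>
        (\<exists>i j ys. 1 \<le> i \<and> real i \<le> i0 \<and> i < j \<and> j \<le> length xs \<and>
           set ys \<subseteq> Spm G S \<and> wprod G (subw xs i j) = wprod G ys \<and>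
           int (length ys) \<le> min (int j - int i) (int (length xs) - int j + int i - 2)))"

text \<open>Points: vertices V g, and interior edge points E a b t (on the edge {a,b}, at
  distance t from a). E a b t and E b a (1-t) represent the same point.\<close>
datatype 'a cpt = V 'a | E 'a 'a real

definition cadj :: "('a, 'b) monoid_scheme \<Rightarrow> 'a set \<Rightarrow> 'a \<Rightarrow> 'a \<Rightarrow> bool" where
  "cadj G S a b \<longleftrightarrow> a \<in> carrier G \<and> (\<exists>s \<in> Spm G S. b = a \<otimes>\<^bsub>G\<^esub> s)"

definition cpoints :: "('a, 'b) monoid_scheme \<Rightarrow> 'a set \<Rightarrow> 'a cpt set" where
  "cpoints G S = {V g | g. g \<in> carrier G} \<union> {E a b t | a b t. cadj G S a b \<and> 0 < t \<and> t < 1}"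

definition vdist :: "('a, 'b) monoid_scheme \<Rightarrow> 'a set \<Rightarrow> 'a \<Rightarrow> 'a \<Rightarrow> real" where
  "vdist G S a b = real (LEAST n. \<exists>w. set w \<subseteq> Spm G S \<and> length w = n \<and> a \<otimes>\<^bsub>G\<^esub> wprod G w = b)"

fun ends :: "'a cpt \<Rightarrow> ('a \<times> real) list" where
  "ends (V g) = [(g, 0)]"
| "ends (E a b t) = [(a, t), (b, 1 - t)]"

definition via :: "('a, 'b) monoid_scheme \<Rightarrow> 'a set \<Rightarrow> 'a cpt \<Rightarrow> 'a cpt \<Rightarrow> real" where
  "via G S p q = Min {x + vdist G S u v + y | u x v y. (u, x) \<in> set (ends p) \<and> (v, y) \<in> set (ends q)}"

text \<open>Path-length metric of the Cayley graph with unit-length edges.\<close>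
fun cdist :: "('a, 'b) monoid_scheme \<Rightarrow> 'a set \<Rightarrow> 'a cpt \<Rightarrow> 'a cpt \<Rightarrow> real" where
  "cdist G S (E a b t) (E c d u) =
     (if a = c \<and> b = d then min \<bar>t - u\<bar> (via G S (E a b t) (E c d u))
      else if a = d \<and> b = c then min \<bar>t - (1 - u)\<bar> (via G S (E a b t) (E c d u))
      else via G S (E a b t) (E c d u))"
| "cdist G S p q = via G S p q"

definition geodesic :: "('a, 'b) monoid_scheme \<Rightarrow> 'a set \<Rightarrow> (real \<Rightarrow> 'a cpt) \<Rightarrow> real \<Rightarrow> bool" where
  "geodesic G S \<gamma> L \<longleftrightarrow> 0 \<le> L \<and> \<gamma> ` {0..L} \<subseteq> cpoints G S \<and>
     (\<forall>s\<in>{0..L}. \<forall>t\<in>{0..L}. cdist G S (\<gamma> s) (\<gamma> t) = \<bar>s - t\<bar>)"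

definition in_nbhd :: "('a, 'b) monoid_scheme \<Rightarrow> 'a set \<Rightarrow> real \<Rightarrow> 'a cpt set \<Rightarrow> 'a cpt set \<Rightarrow> bool" where
  "in_nbhd G S \<delta> A B \<longleftrightarrow> (\<forall>p\<in>A. \<forall>\<epsilon>>0. \<exists>q\<in>B. cdist G S p q \<le> \<delta> + \<epsilon>)"

definition cayley_hyperbolic :: "('a, 'b) monoid_scheme \<Rightarrow> 'a set \<Rightarrow> real \<Rightarrow> bool" where
  "cayley_hyperbolic G S \<delta> \<longleftrightarrow>
     (\<forall>\<gamma>1 L1 \<gamma>2 L2 \<gamma>3 L3.
        geodesic G S \<gamma>1 L1 \<and> geodesic G S \<gamma>2 L2 \<and> geodesic G S \<gamma>3 L3 \<and>
        \<gamma>1 L1 = \<gamma>2 0 \<and> \<gamma>2 L2 = \<gamma>3 0 \<and> \<gamma>3 L3 = \<gamma>1 0 \<longrightarrow>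
        in_nbhd G S \<delta> (\<gamma>1 ` {0..L1}) (\<gamma>2 ` {0..L2} \<union> \<gamma>3 ` {0..L3}) \<and>
        in_nbhd G S \<delta> (\<gamma>2 ` {0..L2}) (\<gamma>1 ` {0..L1} \<union> \<gamma>3 ` {0..L3}) \<and>
        in_nbhd G S \<delta> (\<gamma>3 ` {0..L3}) (\<gamma>1 ` {0..L1} \<union> \<gamma>2 ` {0..L2}))"

end

theory Submission
  imports Defs
begin

(*
  Let s_1 ... s_n = e be a closed word of length n >= 4 delta + 3, let g_k = s_1 ... s_k, and
  let p = floor delta + 1.  Suppose no chord starts at position a + 1 for a = 0 and for a = p.
  Then the distance from g_a to the point at arc length x of the closed path traced by the word
  is at least the distance min (x - a) (n - x + a) along the cycle.  For a = 0 this makes the two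
  halves of the cycle geodesics, i.e. a geodesic bigon, which is delta-thin by hyperbolicity:
  g_p lies within delta of a point of the second half.  But for a = p, every point of the second
  half is at distance at least min p (n/2 - p) > delta from g_p.  So a chord starts at position 1
  or floor delta + 2 <= 4 delta + 2.
*)

lemma wprod_Nil [simp]: "wprod G [] = \<one>\<^bsub>G\<^esub>"
  by (simp add: wprod_def)

lemma wprod_Cons [simp]: "wprod G (x # w) = x \<otimes>\<^bsub>G\<^esub> wprod G w"
  by (simp add: wprod_def)

lemma Spm_not_one: "s \<in> Spm G S \<Longrightarrow> s \<noteq> \<one>\<^bsub>G\<^esub>"
  by (simp add: Spm_def)

locale generating_set = group G for G (structure) +
  fixes S :: "'a set"
  assumes gens_closed: "S \<subseteq> carrier G"
    and gens_generate: "generate G S = carrier G"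
begin

lemma Spm_closed: "Spm G S \<subseteq> carrier G"
  using gens_closed by (auto simp: Spm_def)

lemma Spm_inv: "s \<in> Spm G S \<Longrightarrow> inv s \<in> Spm G S"
  using gens_closed by (auto simp: Spm_def subsetD)

lemma wprod_closed: "set w \<subseteq> carrier G \<Longrightarrow> wprod G w \<in> carrier G"
  by (induction w) auto

lemma wprod_append:
  "set v \<subseteq> carrier G \<Longrightarrow> set w \<subseteq> carrier G \<Longrightarrow> wprod G (v @ w) = wprod G v \<otimes> wprod G w"
  by (induction v) (auto simp: wprod_closed m_assoc)

lemma wprod_rev_inv: "set w \<subseteq> carrier G \<Longrightarrow> wprod G (rev (map (m_inv G) w)) = inv (wprod G w)"
proof (induction w)
  case (Cons a w)
  have "set (rev (map (m_inv G) w)) \<subseteq> carrier G"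
    using Cons.prems by auto
  then show ?case
    using Cons by (simp add: wprod_append wprod_closed inv_mult_group)
qed simp

lemma word_exists:
  assumes "x \<in> carrier G"
  shows "\<exists>w. set w \<subseteq> Spm G S \<and> wprod G w = x"
proof -
  have letter: "\<exists>w. set w \<subseteq> Spm G S \<and> wprod G w = y" if "y = \<one> \<or> y \<in> Spm G S" for y
    using that
  proof
    assume "y \<in> Spm G S"
    then show ?thesis
      using Spm_closed by (intro exI[of _ "[y]"]) auto
  qed (auto intro: exI[of _ "[]"])
  from assms show ?thesis
    unfolding gens_generate[symmetric]
  proof (induction rule: generate.induct)
    case one
    show ?case
      by (rule letter) simp
  next
    case (incl h)
    then show ?case
      by (intro letter) (auto simp: Spm_def)
  next
    case (inv h)
    then show ?case
      using gens_closed by (intro letter) (auto simp: Spm_def)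
  next
    case (eng h1 h2)
    then obtain w1 w2 where "set w1 \<subseteq> Spm G S" "wprod G w1 = h1" "set w2 \<subseteq> Spm G S" "wprod G w2 = h2"
      by blast
    then show ?case
      using Spm_closed by (auto simp: wprod_append intro!: exI[of _ "w1 @ w2"])
  qed
qed

lemma vdist_le_length: "set w \<subseteq> Spm G S \<Longrightarrow> a \<otimes> wprod G w = b \<Longrightarrow> vdist G S a b \<le> length w"
  unfolding vdist_def of_nat_le_iff by (rule Least_le) blast

lemma vdist_witness:
  assumes "a \<in> carrier G" "b \<in> carrier G"
  obtains w where "set w \<subseteq> Spm G S" "a \<otimes> wprod G w = b" "vdist G S a b = length w"
proof -
  define P where "P n \<longleftrightarrow> (\<exists>w. set w \<subseteq> Spm G S \<and> length w = n \<and> a \<otimes> wprod G w = b)" for n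
  obtain w where w: "set w \<subseteq> Spm G S" "wprod G w = inv a \<otimes> b"
    using word_exists[of "inv a \<otimes> b"] assms by auto
  then have "a \<otimes> wprod G w = b"
    using assms by (simp add: m_assoc[symmetric])
  then have "P (length w)"
    using w(1) unfolding P_def by blast
  then have "P (LEAST n. P n)"
    by (rule LeastI)
  then obtain v where "set v \<subseteq> Spm G S" "length v = (LEAST n. P n)" "a \<otimes> wprod G v = b"
    unfolding P_def by blast
  moreover have "vdist G S a b = (LEAST n. P n)"
    unfolding vdist_def P_def ..
  ultimately show thesis
    using that by simp
qed

lemma vdist_nonneg: "0 \<le> vdist G S a b"
  by (simp add: vdist_def)

lemma vdist_self: "a \<in> carrier G \<Longrightarrow> vdist G S a a = 0"
  using vdist_le_length[of "[]" a a] vdist_nonneg[of a a] by simp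

lemma vdist_pos:
  assumes "a \<in> carrier G" "b \<in> carrier G" "a \<noteq> b"
  shows "1 \<le> vdist G S a b"
proof -
  obtain w where "a \<otimes> wprod G w = b" "vdist G S a b = length w"
    using vdist_witness[OF assms(1,2)] by blast
  then show ?thesis
    using assms by (cases w) auto
qed

lemma vdist_triangle:
  assumes "a \<in> carrier G" "b \<in> carrier G" "c \<in> carrier G"
  shows "vdist G S a c \<le> vdist G S a b + vdist G S b c"
proof -
  obtain v where v: "set v \<subseteq> Spm G S" "a \<otimes> wprod G v = b" "vdist G S a b = length v"
    using vdist_witness[OF assms(1,2)] by blast
  obtain w where w: "set w \<subseteq> Spm G S" "b \<otimes> wprod G w = c" "vdist G S b c = length w"
    using vdist_witness[OF assms(2,3)] by blast
  have "a \<otimes> wprod G (v @ w) = c"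
    using v w assms Spm_closed by (auto simp: wprod_append wprod_closed m_assoc[symmetric])
  then show ?thesis
    using vdist_le_length[of "v @ w"] v w by auto
qed

lemma vdist_sym_le:
  assumes "a \<in> carrier G" "b \<in> carrier G"
  shows "vdist G S b a \<le> vdist G S a b"
proof -
  obtain w where w: "set w \<subseteq> Spm G S" "a \<otimes> wprod G w = b" "vdist G S a b = length w"
    using vdist_witness[OF assms(1,2)] by blast
  have w_closed: "set w \<subseteq> carrier G"
    using w(1) Spm_closed by auto
  have "b \<otimes> wprod G (rev (map (m_inv G) w)) = a"
    using w(2) assms by (auto simp: wprod_rev_inv[OF w_closed] m_assoc wprod_closed[OF w_closed])
  moreover have "set (rev (map (m_inv G) w)) \<subseteq> Spm G S"
    using w(1) Spm_inv by auto
  ultimately have "vdist G S b a \<le> length (rev (map (m_inv G) w))"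
    by (rule vdist_le_length[rotated])
  then show ?thesis
    using w(3) by simp
qed

lemma vdist_sym: "a \<in> carrier G \<Longrightarrow> b \<in> carrier G \<Longrightarrow> vdist G S a b = vdist G S b a"
  using vdist_sym_le by (meson antisym)

lemma vdist_step: "a \<in> carrier G \<Longrightarrow> s \<in> Spm G S \<Longrightarrow> vdist G S a (a \<otimes> s) \<le> 1"
  using vdist_le_length[of "[s]" a] Spm_closed by auto

end

lemma via_eq_Min_image:
  "via G S p q = Min ((\<lambda>((u, x), (v, y)). x + vdist G S u v + y) ` (set (ends p) \<times> set (ends q)))"
  unfolding via_def by (rule arg_cong[where f = Min]) force

lemma ends_nonempty: "ends p \<noteq> []"
  by (cases p) auto

lemma via_le:
  assumes "(u, x) \<in> set (ends p)" "(v, y) \<in> set (ends q)"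
  shows "via G S p q \<le> x + vdist G S u v + y"
  unfolding via_eq_Min_image
  by (rule Min_le) (use assms in \<open>auto intro!: image_eqI[where x = "((u, x), (v, y))"]\<close>)

lemma via_greatest:
  "(\<And>u x v y. (u, x) \<in> set (ends p) \<Longrightarrow> (v, y) \<in> set (ends q) \<Longrightarrow> B \<le> x + vdist G S u v + y)
    \<Longrightarrow> B \<le> via G S p q"
  unfolding via_eq_Min_image using ends_nonempty[of p] ends_nonempty[of q]
  by (subst Min_ge_iff) (auto simp: neq_Nil_conv)

lemma cdist_le_via: "cdist G S p q \<le> via G S p q"
  by (cases p; cases q) auto

lemma cdist_le_ends:
  "(u, x) \<in> set (ends p) \<Longrightarrow> (v, y) \<in> set (ends q) \<Longrightarrow> cdist G S p q \<le> x + vdist G S u v + y"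
  by (rule order_trans[OF cdist_le_via via_le])

lemma cdist_vertex_vertex: "cdist G S (V a) (V b) = vdist G S a b"
  by (simp add: via_eq_Min_image)

lemma cdist_vertex_edge: "cdist G S (V c) (E a b t) = min (vdist G S c a + t) (vdist G S c b + (1 - t))"
  by (simp add: via_eq_Min_image)

lemma cdist_vertex_edge_flip: "cdist G S (V c) (E b a t) = cdist G S (V c) (E a b (1 - t))"
  unfolding cdist_vertex_edge by (simp add: min.commute)

lemma cdist_vertex_edge_move: "cdist G S (V c) (E a b u) \<le> cdist G S (V c) (E a b t) + \<bar>t - u\<bar>"
  unfolding cdist_vertex_edge by (simp add: min_def abs_if)

lemma le_add_min: "x \<le> y + a \<Longrightarrow> x \<le> y + b \<Longrightarrow> x \<le> y + min a b"
  for x y a b :: real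
  by (simp add: min_def)

context generating_set
begin

lemma ends_closed: "p \<in> cpoints G S \<Longrightarrow> (u, x) \<in> set (ends p) \<Longrightarrow> u \<in> carrier G"
  using Spm_closed by (auto simp: cpoints_def cadj_def subsetD)

lemma via_sym:
  assumes "p \<in> cpoints G S" "q \<in> cpoints G S"
  shows "via G S p q = via G S q p"
proof -
  let ?f = "\<lambda>((u, x), (v, y)). x + vdist G S u v + y"
  have "?f ` (set (ends q) \<times> set (ends p)) = ?f ` prod.swap ` (set (ends p) \<times> set (ends q))"
    by (simp add: product_swap)
  also have "\<dots> = ?f ` (set (ends p) \<times> set (ends q))"
    unfolding image_comp
    by (rule image_cong) (auto simp: vdist_sym ends_closed[OF assms(1)] ends_closed[OF assms(2)])
  finally show ?thesis
    unfolding via_eq_Min_image by simp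
qed

lemma cdist_sym:
  assumes "p \<in> cpoints G S" "q \<in> cpoints G S"
  shows "cdist G S p q = cdist G S q p"
proof (cases "\<exists>a b t c d u. p = E a b t \<and> q = E c d u")
  case True
  then obtain a b t c d u where pq: "p = E a b t" "q = E c d u"
    by blast
  have via: "via G S (E a b t) (E c d u) = via G S (E c d u) (E a b t)"
    using via_sym assms unfolding pq by blast
  have "\<bar>t - (1 - u)\<bar> = \<bar>u - (1 - t)\<bar>"
    by arith
  moreover have "(c = a \<and> d = b) = (a = c \<and> b = d)" "(c = b \<and> d = a) = (a = d \<and> b = c)"
    by blast+
  ultimately show ?thesis
    unfolding pq cdist.simps(1) via abs_minus_commute[of t u] by simp
next
  case False
  then have "cdist G S p q = via G S p q \<and> cdist G S q p = via G S q p"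
    by (cases p; cases q) simp_all
  then show ?thesis
    using via_sym[OF assms] by simp
qed

lemma vdist_end_le:
  assumes "c \<in> carrier G" "p \<in> cpoints G S" "(u, x) \<in> set (ends p)"
  shows "vdist G S c u \<le> cdist G S (V c) p + x"
proof (cases p)
  case (V g)
  then show ?thesis
    using assms(3) by (simp add: via_eq_Min_image)
next
  case (E a b t)
  then obtain s where ab: "a \<in> carrier G" "s \<in> Spm G S" "b = a \<otimes> s" "0 < t" "t < 1"
    using assms(2) by (auto simp: cpoints_def cadj_def)
  then have b: "b \<in> carrier G"
    using Spm_closed by auto
  have "vdist G S a b \<le> 1"
    using vdist_step ab by simp
  moreover have "vdist G S c b \<le> vdist G S c a + vdist G S a b" "vdist G S c a \<le> vdist G S c b + vdist G S b a"
    using vdist_triangle assms(1) ab(1) b by blast+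
  ultimately have "vdist G S c b \<le> vdist G S c a + 1" "vdist G S c a \<le> vdist G S c b + 1"
    using vdist_sym ab(1) b by auto
  then show ?thesis
    using assms(3) ab(4,5) unfolding E cdist_vertex_edge by auto
qed

lemma cdist_vertex_via:
  assumes "c \<in> carrier G" "p \<in> cpoints G S" "q \<in> cpoints G S"
  shows "cdist G S (V c) q \<le> cdist G S (V c) p + via G S p q"
proof -
  have "cdist G S (V c) q - cdist G S (V c) p \<le> via G S p q"
  proof (rule via_greatest)
    fix u x v y
    assume u: "(u, x) \<in> set (ends p)" and v: "(v, y) \<in> set (ends q)"
    have "cdist G S (V c) q \<le> 0 + vdist G S c v + y"
      by (rule cdist_le_ends) (use v in auto)
    also have "\<dots> \<le> vdist G S c u + vdist G S u v + y"
      using vdist_triangle[OF assms(1) ends_closed[OF assms(2) u] ends_closed[OF assms(3) v]] by simp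
    also have "\<dots> \<le> cdist G S (V c) p + x + vdist G S u v + y"
      using vdist_end_le[OF assms(1,2) u] by simp
    finally show "cdist G S (V c) q - cdist G S (V c) p \<le> x + vdist G S u v + y"
      by simp
  qed
  then show ?thesis
    by simp
qed

lemma cdist_vertex_triangle_edges:
  assumes "c \<in> carrier G" "E a b t \<in> cpoints G S" "E a' b' u \<in> cpoints G S"
  shows "cdist G S (V c) (E a' b' u) \<le> cdist G S (V c) (E a b t) + cdist G S (E a b t) (E a' b' u)"
proof -
  have via: "cdist G S (V c) (E a' b' u) \<le> cdist G S (V c) (E a b t) + via G S (E a b t) (E a' b' u)"
    by (rule cdist_vertex_via[OF assms])
  consider (same) "a = a' \<and> b = b'"
    | (flipped) "\<not> (a = a' \<and> b = b')" "a = b' \<and> b = a'"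
    | (other) "\<not> (a = a' \<and> b = b')" "\<not> (a = b' \<and> b = a')"
    by argo
  then show ?thesis
  proof cases
    case same
    then have a: "a' = a" "b' = b"
      by simp_all
    have "cdist G S (V c) (E a b u) \<le> cdist G S (V c) (E a b t) + \<bar>t - u\<bar>"
      by (rule cdist_vertex_edge_move)
    then show ?thesis
      using via le_add_min unfolding a by simp
  next
    case flipped
    then have a: "a' = b" "b' = a" and "a \<noteq> b"
      by auto
    have "cdist G S (V c) (E b a u) \<le> cdist G S (V c) (E a b t) + \<bar>t - (1 - u)\<bar>"
      unfolding cdist_vertex_edge_flip[of G S c b a u] by (rule cdist_vertex_edge_move)
    then show ?thesis
      using via le_add_min \<open>a \<noteq> b\<close> unfolding a by simp
  next
    case other
    then have "cdist G S (E a b t) (E a' b' u) = via G S (E a b t) (E a' b' u)"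
      unfolding cdist.simps(1) by (simp only: if_False)
    then show ?thesis
      using via by simp
  qed
qed

lemma cdist_vertex_triangle:
  assumes "c \<in> carrier G" "p \<in> cpoints G S" "q \<in> cpoints G S"
  shows "cdist G S (V c) q \<le> cdist G S (V c) p + cdist G S p q"
proof (cases "\<exists>a b t a' b' u. p = E a b t \<and> q = E a' b' u")
  case True
  then show ?thesis
    using cdist_vertex_triangle_edges assms by blast
next
  case False
  then have "cdist G S p q = via G S p q"
    by (cases p; cases q) simp_all
  then show ?thesis
    using cdist_vertex_via[OF assms] by simp
qed

lemma cdist_vertex_lipschitz:
  assumes "c \<in> carrier G" "p \<in> cpoints G S" "q \<in> cpoints G S"
  shows "\<bar>cdist G S (V c) p - cdist G S (V c) q\<bar> \<le> cdist G S p q"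
  using cdist_vertex_triangle[OF assms] cdist_vertex_triangle[OF assms(1,3,2)] cdist_sym[OF assms(2,3)]
  by linarith

end

lemma cayley_hyperbolic_bigon:
  assumes "cayley_hyperbolic G S \<delta>" "geodesic G S \<gamma> L" "geodesic G S \<eta> M"
    and "\<gamma> L = \<eta> 0" "\<eta> M = \<gamma> 0"
  shows "in_nbhd G S \<delta> (\<gamma> ` {0..L}) (\<eta> ` {0..M})"
proof -
  have "0 \<le> M" "\<eta> 0 \<in> cpoints G S" "cdist G S (\<eta> 0) (\<eta> 0) = 0"
    using assms(3) unfolding geodesic_def by auto
  then have "geodesic G S (\<lambda>_. \<eta> 0) 0"
    unfolding geodesic_def by simp
  then have "in_nbhd G S \<delta> (\<gamma> ` {0..L}) ((\<lambda>_. \<eta> 0) ` {0..0::real} \<union> \<eta> ` {0..M})"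
    using assms(1)[unfolded cayley_hyperbolic_def, rule_format, of \<gamma> L "\<lambda>_. \<eta> 0" 0 \<eta> M] assms(2-5)
    by blast
  moreover have "(\<lambda>_. \<eta> 0) ` {0..0::real} \<union> \<eta> ` {0..M} = \<eta> ` {0..M}"
    using \<open>0 \<le> M\<close> by auto
  ultimately show ?thesis
    by simp
qed

context generating_set
begin

lemma cayley_hyperbolic_nonneg:
  assumes "cayley_hyperbolic G S \<delta>"
  shows "0 \<le> \<delta>"
proof (rule field_le_epsilon)
  fix \<epsilon> :: real
  assume "0 < \<epsilon>"
  have one: "cdist G S (V \<one>) (V \<one>) = 0"
    unfolding cdist_vertex_vertex by (simp add: vdist_self)
  then have "geodesic G S (\<lambda>_. V \<one>) 0"
    unfolding geodesic_def cpoints_def by simp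
  then have "in_nbhd G S \<delta> {V \<one>} {V \<one>}"
    using cayley_hyperbolic_bigon[OF assms] by fastforce
  then show "0 \<le> \<delta> + \<epsilon>"
    using \<open>0 < \<epsilon>\<close> one unfolding in_nbhd_def by force
qed

end

definition path_vertex :: "('a, 'b) monoid_scheme \<Rightarrow> 'a list \<Rightarrow> nat \<Rightarrow> 'a" where
  "path_vertex G xs k = wprod G (take k xs)"

lemma path_vertex_0 [simp]: "path_vertex G xs 0 = \<one>\<^bsub>G\<^esub>"
  by (simp add: path_vertex_def)

lemma path_vertex_length: "path_vertex G xs (length xs) = wprod G xs"
  by (simp add: path_vertex_def)

lemma take_Suc_subw: "take l xs = take a xs @ subw xs (Suc a) l" if "a \<le> l"
  using that take_add[of a "l - a" xs] by (simp add: subw_def)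

lemma set_subw: "set (subw xs i j) \<subseteq> set xs"
  unfolding subw_def by (meson order_trans set_take_subset set_drop_subset)

definition word_path :: "('a, 'b) monoid_scheme \<Rightarrow> 'a list \<Rightarrow> real \<Rightarrow> 'a cpt" where
  "word_path G xs x =
     (if x \<in> \<int> then V (path_vertex G xs (nat \<lfloor>x\<rfloor>))
      else E (path_vertex G xs (nat \<lfloor>x\<rfloor>)) (path_vertex G xs (Suc (nat \<lfloor>x\<rfloor>))) (frac x))"

lemma word_path_of_nat [simp]: "word_path G xs (real k) = V (path_vertex G xs k)"
  by (simp add: word_path_def)

lemma word_path_0 [simp]: "word_path G xs 0 = V \<one>\<^bsub>G\<^esub>"
  using word_path_of_nat[of G xs 0] by simp

lemma word_path_edge:
  assumes "0 < t" "t < 1"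
  shows "word_path G xs (real k + t) = E (path_vertex G xs k) (path_vertex G xs (Suc k)) t"
proof -
  have frac: "frac (real k + t) = t"
    using assms by (simp add: frac_unique_iff)
  then have "real k + t \<notin> \<int>"
    using assms(1) by (metis frac_eq_0_iff less_irrefl)
  moreover have "\<lfloor>real k + t\<rfloor> = int k"
    using assms by (simp add: floor_eq_iff)
  ultimately show ?thesis
    by (simp add: word_path_def frac)
qed

lemma real_grid_cases:
  assumes "0 \<le> x" "x \<le> real n"
  obtains (vertex) k where "k \<le> n" "x = real k"
  | (edge) k t where "k < n" "0 < t" "t < 1" "x = real k + t"
proof (cases "x \<in> \<int>")
  case True
  then show ?thesis
    using assms vertex[of "nat \<lfloor>x\<rfloor>"] by (auto elim!: Ints_cases)
next
  case False
  then have "of_int \<lfloor>x\<rfloor> < x"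
    using of_int_floor_le[of x] by (metis Ints_of_int order_le_imp_less_or_eq)
  then have "0 < frac x" "frac x < 1" "x = real (nat \<lfloor>x\<rfloor>) + frac x" "nat \<lfloor>x\<rfloor> < n"
    using assms frac_lt_1[of x] by (auto simp: frac_def)
  then show ?thesis
    by (intro edge)
qed

definition chord_at :: "('a, 'b) monoid_scheme \<Rightarrow> 'a set \<Rightarrow> 'a list \<Rightarrow> nat \<Rightarrow> bool" where
  "chord_at G S xs i \<longleftrightarrow>
     (\<exists>j ys. i < j \<and> j \<le> length xs \<and> set ys \<subseteq> Spm G S \<and> wprod G (subw xs i j) = wprod G ys \<and>
        int (length ys) \<le> min (int j - int i) (int (length xs) - int j + int i - 2))"

lemma chordalI:
  assumes "\<And>xs. simple_relation G S xs \<Longrightarrow> k \<le> real (length xs) \<Longrightarrow>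
    \<exists>i. 1 \<le> i \<and> real i \<le> i0 \<and> chord_at G S xs i"
  shows "chordal G S i0 k"
  unfolding chordal_def
proof (intro allI impI)
  fix xs
  assume "simple_relation G S xs \<and> k \<le> real (length xs)"
  then obtain i j ys where "1 \<le> i" "real i \<le> i0" "i < j" "j \<le> length xs" "set ys \<subseteq> Spm G S"
    "wprod G (subw xs i j) = wprod G ys"
    "int (length ys) \<le> min (int j - int i) (int (length xs) - int j + int i - 2)"
    using assms unfolding chord_at_def by blast
  then show "\<exists>i j ys. 1 \<le> i \<and> real i \<le> i0 \<and> i < j \<and> j \<le> length xs \<and> set ys \<subseteq> Spm G S \<and>
      wprod G (subw xs i j) = wprod G ys \<and>
      int (length ys) \<le> min (int j - int i) (int (length xs) - int j + int i - 2)"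
    by blast
qed

lemma simple_relation_closed:
  assumes "simple_relation G S xs"
  shows "set xs \<subseteq> Spm G S" "wprod G xs = \<one>\<^bsub>G\<^esub>"
proof -
  have "length xs > 2" "set xs \<subseteq> Spm G S"
    and "wprod G (subw xs 1 (length xs)) = \<one>\<^bsub>G\<^esub> \<longleftrightarrow> True"
    using assms unfolding simple_relation_def by simp_all
  moreover have "subw xs 1 (length xs) = xs"
    by (simp add: subw_def)
  ultimately show "set xs \<subseteq> Spm G S" "wprod G xs = \<one>\<^bsub>G\<^esub>"
    by simp_all
qed

lemma min_offset_lipschitz: "min (x - a) (n - x + a) \<le> min (y - a) (n - y + a) + \<bar>x - y\<bar>"
  for x y a n :: real
  by (auto simp: min_def abs_if)

context generating_set
begin

context
  fixes xs
  assumes word: "set xs \<subseteq> Spm G S"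
begin

lemma word_closed: "set xs \<subseteq> carrier G"
  using word Spm_closed by blast

lemma path_vertex_closed: "path_vertex G xs k \<in> carrier G"
  unfolding path_vertex_def using word_closed set_take_subset by (metis order_trans wprod_closed)

lemma path_vertex_subw:
  assumes "a \<le> l"
  shows "path_vertex G xs l = path_vertex G xs a \<otimes> wprod G (subw xs (Suc a) l)"
proof -
  have "set (take a xs) \<subseteq> carrier G"
    using word_closed set_take_subset by (metis order_trans)
  moreover have "set (subw xs (Suc a) l) \<subseteq> carrier G"
    using word_closed set_subw by (metis order_trans)
  ultimately show ?thesis
    unfolding path_vertex_def take_Suc_subw[OF assms] by (rule wprod_append)
qed

lemma path_vertex_Suc:
  assumes "k < length xs"
  shows "path_vertex G xs (Suc k) = path_vertex G xs k \<otimes> xs ! k"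
proof -
  have "subw xs (Suc k) (Suc k) = [xs ! k]"
    using assms by (simp add: subw_def Cons_nth_drop_Suc[symmetric])
  moreover have "xs ! k \<in> carrier G"
    using assms word_closed by auto
  ultimately show ?thesis
    using path_vertex_subw[of k "Suc k"] by simp
qed

lemma path_vertex_Suc_neq:
  assumes "k < length xs"
  shows "path_vertex G xs (Suc k) \<noteq> path_vertex G xs k"
proof -
  have "xs ! k \<in> Spm G S"
    using word assms nth_mem by blast
  then have "xs ! k \<in> carrier G" "xs ! k \<noteq> \<one>"
    using Spm_closed Spm_not_one[of "xs ! k" G S] by auto
  then show ?thesis
    using path_vertex_Suc[OF assms] l_cancel_one[OF path_vertex_closed] by simp
qed

lemma vdist_path_vertex_le:
  assumes "k \<le> l" "l \<le> length xs"
  shows "vdist G S (path_vertex G xs k) (path_vertex G xs l) \<le> real l - real k"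
proof -
  have "vdist G S (path_vertex G xs k) (path_vertex G xs l) \<le> length (subw xs (Suc k) l)"
    using word set_subw path_vertex_subw[OF assms(1)] by (metis order_trans vdist_le_length)
  then show ?thesis
    using assms by (simp add: subw_def)
qed

lemma word_path_in_cpoints:
  assumes "0 \<le> x" "x \<le> real (length xs)"
  shows "word_path G xs x \<in> cpoints G S"
  using assms
proof (cases rule: real_grid_cases)
  case (vertex k)
  then show ?thesis
    using path_vertex_closed by (simp add: cpoints_def)
next
  case (edge k t)
  then have "xs ! k \<in> Spm G S"
    using word nth_mem by blast
  then have "cadj G S (path_vertex G xs k) (path_vertex G xs (Suc k))"
    using path_vertex_closed path_vertex_Suc edge(1) by (auto simp: cadj_def)
  then show ?thesis
    using edge by (auto simp: cpoints_def word_path_edge)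
qed

lemma word_path_ends:
  fixes x :: real
  assumes "0 \<le> x" "x \<le> real (length xs)"
  shows "(path_vertex G xs (nat \<lfloor>x\<rfloor>), x - \<lfloor>x\<rfloor>) \<in> set (ends (word_path G xs x)) \<and>
    (path_vertex G xs (nat \<lceil>x\<rceil>), \<lceil>x\<rceil> - x) \<in> set (ends (word_path G xs x))"
  using assms
proof (cases rule: real_grid_cases)
  case (edge k t)
  then have fc: "\<lfloor>x\<rfloor> = int k" "\<lceil>x\<rceil> = int (Suc k)"
    by (simp_all add: floor_eq_iff ceiling_eq_iff)
  show ?thesis
    unfolding fc nat_int of_int_of_nat_eq unfolding edge(4) by (simp add: word_path_edge edge)
qed simp

lemma word_path_dist_le_ordered:
  assumes "0 \<le> s" "s \<le> t" "t \<le> real (length xs)"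
  shows "cdist G S (word_path G xs s) (word_path G xs t) \<le> t - s"
proof (cases "\<lceil>s\<rceil> \<le> \<lfloor>t\<rfloor>")
  case True
  have bound: "cdist G S (word_path G xs s) (word_path G xs t)
    \<le> (\<lceil>s\<rceil> - s) + vdist G S (path_vertex G xs (nat \<lceil>s\<rceil>)) (path_vertex G xs (nat \<lfloor>t\<rfloor>)) + (t - \<lfloor>t\<rfloor>)"
    using word_path_ends assms by (intro cdist_le_ends) auto
  have "\<lfloor>t\<rfloor> \<le> int (length xs)"
    using assms(3) by (metis floor_mono floor_of_nat)
  then have "vdist G S (path_vertex G xs (nat \<lceil>s\<rceil>)) (path_vertex G xs (nat \<lfloor>t\<rfloor>)) \<le> \<lfloor>t\<rfloor> - \<lceil>s\<rceil>"
    using vdist_path_vertex_le[of "nat \<lceil>s\<rceil>" "nat \<lfloor>t\<rfloor>"] True assms by (simp add: nat_le_iff le_floor_iff)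
  then show ?thesis
    using bound by simp
next
  case False
  have "s \<le> real (length xs)"
    using assms by simp
  with assms(1) show ?thesis
  proof (cases rule: real_grid_cases)
    case (vertex k)
    then show ?thesis
      using False assms(2) by (simp add: le_floor_iff)
  next
    case (edge k \<sigma>)
    have "\<lceil>s\<rceil> = int k + 1"
      using edge by (simp add: ceiling_eq_iff)
    then have "\<lfloor>t\<rfloor> < int k + 1"
      using False by simp
    then have "t < real k + 1"
      using floor_less_iff[of t "int k + 1"] by simp
    then have "word_path G xs t = E (path_vertex G xs k) (path_vertex G xs (Suc k)) (t - real k)"
      using word_path_edge[of "t - real k" G xs k] edge assms(2) by simp
    then show ?thesis
      using edge assms(2) by (simp add: word_path_edge min_le_iff_disj)
  qed
qed

lemma word_path_dist_le:
  assumes "0 \<le> s" "s \<le> real (length xs)" "0 \<le> t" "t \<le> real (length xs)"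
  shows "cdist G S (word_path G xs s) (word_path G xs t) \<le> \<bar>s - t\<bar>"
proof (cases "s \<le> t")
  case True
  then show ?thesis
    using word_path_dist_le_ordered assms by simp
next
  case False
  then show ?thesis
    using word_path_dist_le_ordered[of t s] cdist_sym word_path_in_cpoints assms by simp
qed

lemma no_chord_vdist_path_vertex_ge:
  assumes "\<not> chord_at G S xs (Suc a)" "a \<le> l" "l \<le> length xs"
  shows "min (real l - real a) (real (length xs) - real l + real a)
    \<le> vdist G S (path_vertex G xs a) (path_vertex G xs l)"
proof -
  consider "l = a" | "l = Suc a" | "Suc a < l"
    using assms(2) by linarith
  then show ?thesis
  proof cases
    case 1
    then show ?thesis
      using vdist_nonneg by (simp add: min_le_iff_disj)
  next
    case 2
    then have "path_vertex G xs l \<noteq> path_vertex G xs a"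
      using path_vertex_Suc_neq assms(3) by simp
    then have "1 \<le> vdist G S (path_vertex G xs a) (path_vertex G xs l)"
      using vdist_pos path_vertex_closed by metis
    then show ?thesis
      using 2 by (simp add: min_le_iff_disj)
  next
    case 3
    obtain w where w: "set w \<subseteq> Spm G S" "path_vertex G xs a \<otimes> wprod G w = path_vertex G xs l"
      "vdist G S (path_vertex G xs a) (path_vertex G xs l) = length w"
      using vdist_witness[OF path_vertex_closed path_vertex_closed] by blast
    have "set w \<subseteq> carrier G"
      using w(1) Spm_closed by blast
    moreover have "set (subw xs (Suc a) l) \<subseteq> carrier G"
      using word_closed set_subw by (metis order_trans)
    ultimately have "wprod G (subw xs (Suc a) l) = wprod G w"
      using w(2) path_vertex_subw[OF assms(2)] path_vertex_closed wprod_closed by simp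
    then have "chord_at G S xs (Suc a)"
      if "int (length w) \<le> min (int l - int (Suc a)) (int (length xs) - int l + int (Suc a) - 2)"
      unfolding chord_at_def using that 3 assms(3) w(1) by blast
    then have "\<not> int (length w) \<le> min (int l - int (Suc a)) (int (length xs) - int l + int (Suc a) - 2)"
      using assms(1) by blast
    then show ?thesis
      using w(3) by linarith
  qed
qed

lemma no_chord_cdist_word_path_ge:
  assumes "\<not> chord_at G S xs (Suc a)" "real a \<le> x" "x \<le> real (length xs)"
  shows "min (x - real a) (real (length xs) - x + real a)
    \<le> cdist G S (V (path_vertex G xs a)) (word_path G xs x)"
proof -
  have "0 \<le> x"
    using assms(2) by simp
  then show ?thesis
    using assms(3)
  proof (cases rule: real_grid_cases)
    case (vertex k)
    then show ?thesis
      unfolding vertex(2) word_path_of_nat cdist_vertex_vertex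
      using no_chord_vdist_path_vertex_ge[OF assms(1), of k] vertex assms(2) by simp
  next
    case (edge k t)
    then have "a \<le> k"
      using assms(2) by linarith
    then have "min (real k - real a) (real (length xs) - real k + real a)
        \<le> vdist G S (path_vertex G xs a) (path_vertex G xs k)"
      "min (real (Suc k) - real a) (real (length xs) - real (Suc k) + real a)
        \<le> vdist G S (path_vertex G xs a) (path_vertex G xs (Suc k))"
      using no_chord_vdist_path_vertex_ge[OF assms(1), of k] no_chord_vdist_path_vertex_ge[OF assms(1), of "Suc k"] edge(1)
      by simp_all
    moreover have "min (x - real a) (real (length xs) - x + real a)
        \<le> min (real k - real a) (real (length xs) - real k + real a) + t"
      "min (x - real a) (real (length xs) - x + real a)
        \<le> min (real (Suc k) - real a) (real (length xs) - real (Suc k) + real a) + (1 - t)"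
      using min_offset_lipschitz[of x "real a" "real (length xs)" "real k"]
        min_offset_lipschitz[of x "real a" "real (length xs)" "real (Suc k)"] edge by simp_all
    ultimately show ?thesis
      unfolding edge(4) word_path_edge[OF edge(2,3)] cdist_vertex_edge by simp
  qed
qed

lemma word_path_segment_geodesic:
  assumes "0 \<le> \<alpha>" "\<alpha> \<le> \<beta>" "\<beta> \<le> real (length xs)" "c \<in> carrier G"
    and expanding: "\<And>s t. \<alpha> \<le> s \<Longrightarrow> s \<le> \<beta> \<Longrightarrow> \<alpha> \<le> t \<Longrightarrow> t \<le> \<beta> \<Longrightarrow>
      \<bar>s - t\<bar> \<le> \<bar>cdist G S (V c) (word_path G xs s) - cdist G S (V c) (word_path G xs t)\<bar>"
  shows "geodesic G S (\<lambda>t. word_path G xs (\<alpha> + t)) (\<beta> - \<alpha>)"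
  unfolding geodesic_def
proof (intro conjI ballI)
  show "0 \<le> \<beta> - \<alpha>"
    using assms by simp
  show "(\<lambda>t. word_path G xs (\<alpha> + t)) ` {0..\<beta> - \<alpha>} \<subseteq> cpoints G S"
    using assms by (intro image_subsetI word_path_in_cpoints) auto
next
  fix s t
  assume "s \<in> {0..\<beta> - \<alpha>}" "t \<in> {0..\<beta> - \<alpha>}"
  then have "\<alpha> + s \<in> {\<alpha>..\<beta>}" "\<alpha> + t \<in> {\<alpha>..\<beta>}"
    by auto
  then have points: "word_path G xs (\<alpha> + s) \<in> cpoints G S" "word_path G xs (\<alpha> + t) \<in> cpoints G S"
    using assms(1,3) word_path_in_cpoints by auto
  have "cdist G S (word_path G xs (\<alpha> + s)) (word_path G xs (\<alpha> + t)) \<le> \<bar>s - t\<bar>"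
    using word_path_dist_le[of "\<alpha> + s" "\<alpha> + t"] \<open>\<alpha> + s \<in> {\<alpha>..\<beta>}\<close> \<open>\<alpha> + t \<in> {\<alpha>..\<beta>}\<close> assms(1,3)
    by simp
  moreover have "\<bar>s - t\<bar> \<le> cdist G S (word_path G xs (\<alpha> + s)) (word_path G xs (\<alpha> + t))"
    using expanding[of "\<alpha> + s" "\<alpha> + t"] \<open>\<alpha> + s \<in> {\<alpha>..\<beta>}\<close> \<open>\<alpha> + t \<in> {\<alpha>..\<beta>}\<close>
      cdist_vertex_lipschitz[OF assms(4) points]
    by simp
  ultimately show "cdist G S (word_path G xs (\<alpha> + s)) (word_path G xs (\<alpha> + t)) = \<bar>s - t\<bar>"
    by linarith
qed

lemma no_chord_cdist_one_word_path:
  assumes closed: "wprod G xs = \<one>" and "\<not> chord_at G S xs 1"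
    and "0 \<le> x" "x \<le> real (length xs)"
  shows "cdist G S (V \<one>) (word_path G xs x) = min x (real (length xs) - x)"
proof (rule antisym)
  have "word_path G xs 0 = V \<one>" "word_path G xs (real (length xs)) = V \<one>"
    using path_vertex_length[of G xs] closed by simp_all
  then show "cdist G S (V \<one>) (word_path G xs x) \<le> min x (real (length xs) - x)"
    using word_path_dist_le[of 0 x] word_path_dist_le[of "real (length xs)" x] assms(3,4)
    by simp
  show "min x (real (length xs) - x) \<le> cdist G S (V \<one>) (word_path G xs x)"
    using no_chord_cdist_word_path_ge[of 0 x] assms by simp
qed

lemma word_path_halves_geodesic:
  assumes closed: "wprod G xs = \<one>" and "\<not> chord_at G S xs 1"
  shows "geodesic G S (word_path G xs) (real (length xs) / 2)"
    and "geodesic G S (\<lambda>t. word_path G xs (real (length xs) / 2 + t)) (real (length xs) / 2)"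
proof -
  let ?N = "real (length xs)"
  have "geodesic G S (\<lambda>t. word_path G xs (0 + t)) (?N / 2 - 0)"
    by (rule word_path_segment_geodesic) (use no_chord_cdist_one_word_path[OF assms] in auto)
  then show "geodesic G S (word_path G xs) (?N / 2)"
    by simp
  have "geodesic G S (\<lambda>t. word_path G xs (?N / 2 + t)) (?N - ?N / 2)"
    by (rule word_path_segment_geodesic) (use no_chord_cdist_one_word_path[OF assms] in auto)
  then show "geodesic G S (\<lambda>t. word_path G xs (?N / 2 + t)) (?N / 2)"
    by simp
qed

lemma closed_word_has_chord:
  assumes hyp: "cayley_hyperbolic G S \<delta>" and closed: "wprod G xs = \<one>"
    and long: "4 * \<delta> + 3 \<le> real (length xs)"
  shows "chord_at G S xs 1 \<or> chord_at G S xs (nat \<lfloor>\<delta>\<rfloor> + 2)"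
proof (rule ccontr)
  define N where "N = real (length xs)"
  define p where "p = nat \<lfloor>\<delta>\<rfloor> + 1"
  assume "\<not> ?thesis"
  then have no_chord: "\<not> chord_at G S xs 1" "\<not> chord_at G S xs (Suc p)"
    by (simp_all add: p_def)
  have "0 \<le> \<delta>"
    by (rule cayley_hyperbolic_nonneg[OF hyp])
  then have p: "\<delta> < real p" "real p \<le> \<delta> + 1"
    unfolding p_def by linarith+
  define D where "D = min (real p) (N / 2 - real p)"
  have "\<delta> < D"
    using p long by (simp add: D_def N_def)
  have "word_path G xs N = word_path G xs 0"
    using path_vertex_length[of G xs] closed by (simp add: N_def)
  then have "in_nbhd G S \<delta> (word_path G xs ` {0..N / 2}) ((\<lambda>t. word_path G xs (N / 2 + t)) ` {0..N / 2})"
    using cayley_hyperbolic_bigon[OF hyp word_path_halves_geodesic[OF closed no_chord(1)]]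
    by (simp add: N_def)
  moreover have "real p \<in> {0..N / 2}" "0 < (D - \<delta>) / 2"
    using p long \<open>0 \<le> \<delta>\<close> \<open>\<delta> < D\<close> by (auto simp: N_def)
  ultimately obtain u where u: "u \<in> {0..N / 2}"
    "cdist G S (word_path G xs (real p)) (word_path G xs (N / 2 + u)) \<le> \<delta> + (D - \<delta>) / 2"
    unfolding in_nbhd_def by blast
  have far: "min (N / 2 + u - real p) (N - (N / 2 + u) + real p)
      \<le> cdist G S (V (path_vertex G xs p)) (word_path G xs (N / 2 + u))"
    using no_chord_cdist_word_path_ge[OF no_chord(2), of "N / 2 + u"] u \<open>real p \<in> {0..N / 2}\<close>
    by (simp add: N_def)
  have "D \<le> min (N / 2 + u - real p) (N - (N / 2 + u) + real p)"
    using u by (auto simp: D_def)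
  then have "D \<le> cdist G S (word_path G xs (real p)) (word_path G xs (N / 2 + u))"
    unfolding word_path_of_nat using far by (rule order_trans)
  then have "D \<le> \<delta> + (D - \<delta>) / 2"
    using u(2) by (rule order_trans)
  then show False
    using \<open>\<delta> < D\<close> by (simp add: field_simps)
qed

end

end

theorem corollary5:
  fixes G :: "('a, 'b) monoid_scheme" and S :: "'a set" and \<delta> :: real
  assumes "group G" and "S \<subseteq> carrier G" and "finite S" and "generate G S = carrier G"
    and "cayley_hyperbolic G S \<delta>"
  shows "chordal G S (4 * \<delta> + 2) (4 * \<delta> + 3)"
proof (rule chordalI)
  interpret generating_set G S
    using assms by (simp add: generating_set_def generating_set_axioms_def)
  fix xs
  assume xs: "simple_relation G S xs" and long: "4 * \<delta> + 3 \<le> real (length xs)"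
  have "0 \<le> \<delta>"
    by (rule cayley_hyperbolic_nonneg[OF assms(5)])
  then have "real 1 \<le> 4 * \<delta> + 2" "real (nat \<lfloor>\<delta>\<rfloor> + 2) \<le> 4 * \<delta> + 2"
    by linarith+
  moreover have "1 \<le> (1::nat)" "1 \<le> nat \<lfloor>\<delta>\<rfloor> + 2"
    by simp_all
  moreover have "chord_at G S xs 1 \<or> chord_at G S xs (nat \<lfloor>\<delta>\<rfloor> + 2)"
    using closed_word_has_chord[OF simple_relation_closed(1)[OF xs] assms(5) simple_relation_closed(2)[OF xs] long] .
  ultimately show "\<exists>i. 1 \<le> i \<and> real i \<le> 4 * \<delta> + 2 \<and> chord_at G S xs i"
    by blast
qed

end
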